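(* Let $\mathcal{G}=(V,E)$ be an $m$-uniform connected hypergraph with $m>2$ and $n$ vertices. Then $$\lambda_n(L_{\mathcal{G}})\le\max_{i\in V}\frac{2d_i(m-1)-1+\sqrt{4(m-1)^2d_i m_i D_{\max}^2-2d_i(m-1)+1}}{2(m-1)},$$ where $m_i=\big(\sum_{j\sim i}d_j\big)/\big(d_i(m-1)\big)$ and $D_{\max}=\max\{d_{xy}: x,y\in V\}$.
   Context: A hypergraph $\mathcal{G}=(V,E)$ has a finite vertex set $V$ and a set $E$ of subsets of $V$ (edges); it is $m$-uniform if every edge has exactly $m$ vertices. Distinct vertices $i,j$ are adjacent ($i\sim j$) if some edge contains both. The degree $d_i$ is the number of edges containing $i$, and the codegree $d_{xy}$ of distinct vertices $x,y$ is the number of edges containing both. The Laplacian $L_{\mathcal{G}}$ has $(L_{\mathcal{G}})_{ii}=d_i$ and $(L_{\mathcal{G}})_{ij}=-d_{ij}/(m-1)$ for $i\ne j$; $\lambda_n(L_{\mathcal{G}})$ is its largest eigenvalue. *)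

theory Defs
  imports Main "HOL-Analysis.Analysis"
begin

definition hypergraph :: "'a set \<Rightarrow> 'a set set \<Rightarrow> bool" where
  "hypergraph V E \<longleftrightarrow> finite V \<and> (\<forall>e\<in>E. e \<subseteq> V)"

definition uniform :: "nat \<Rightarrow> 'a set set \<Rightarrow> bool" where
  "uniform m E \<longleftrightarrow> (\<forall>e\<in>E. card e = m)"

definition adj :: "'a set set \<Rightarrow> 'a \<Rightarrow> 'a \<Rightarrow> bool" where
  "adj E i j \<longleftrightarrow> i \<noteq> j \<and> (\<exists>e\<in>E. i \<in> e \<and> j \<in> e)"

definition hconnected :: "'a set \<Rightarrow> 'a set set \<Rightarrow> bool" where
  "hconnected V E \<longleftrightarrow>
     (\<forall>i\<in>V. \<forall>j\<in>V. (i, j) \<in> {(x, y). x \<in> V \<and> y \<in> V \<and> adj E x y}\<^sup>*)"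

definition deg :: "'a set set \<Rightarrow> 'a \<Rightarrow> nat" where
  "deg E i = card {e\<in>E. i \<in> e}"

definition codeg :: "'a set set \<Rightarrow> 'a \<Rightarrow> 'a \<Rightarrow> nat" where
  "codeg E x y = card {e\<in>E. x \<in> e \<and> y \<in> e}"

definition laplacian :: "nat \<Rightarrow> 'a set set \<Rightarrow> 'a \<Rightarrow> 'a \<Rightarrow> real" where
  "laplacian m E i j =
     (if i = j then real (deg E i) else - real (codeg E i j) / (real m - 1))"

definition eigenvalues_on :: "'a set \<Rightarrow> ('a \<Rightarrow> 'a \<Rightarrow> real) \<Rightarrow> real set" where
  "eigenvalues_on V A = {\<mu>. \<exists>x :: 'a \<Rightarrow> real. (\<exists>i\<in>V. x i \<noteq> 0) \<and>
       (\<forall>i\<in>V. (\<Sum>j\<in>V. A i j * x j) = \<mu> * x i)}"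

definition largest_eigenvalue :: "'a set \<Rightarrow> ('a \<Rightarrow> 'a \<Rightarrow> real) \<Rightarrow> real" where
  "largest_eigenvalue V A = Max (eigenvalues_on V A)"

definition Dmax :: "'a set \<Rightarrow> 'a set set \<Rightarrow> nat" where
  "Dmax V E = Max {codeg E x y | x y. x \<in> V \<and> y \<in> V \<and> x \<noteq> y}"

definition mi :: "nat \<Rightarrow> 'a set \<Rightarrow> 'a set set \<Rightarrow> 'a \<Rightarrow> real" where
  "mi m V E i = (\<Sum>j\<in>{j\<in>V. adj E i j}. real (deg E j)) / (real (deg E i) * (real m - 1))"

end

(* Let x be an eigenvector of L for its largest eigenvalue l (there are finitely
   many eigenvalues, and 0 is one of them). At a vertex i the eigen-equation says
   that the sum, over the edges e at i, of sum_{j in e - {i}} x_j equals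
   (m-1)(d_i - l) x_i. Squaring this, applying Cauchy-Schwarz over the d_i edges at i,
   summing over i and regrouping by edges, an elementary inequality on a single
   edge (valid once |e| >= 3) gives
     sum_i ((m-1)(l - d_i)^2 + l - d_i/2) x_i^2 <= sum_i x_i^2 sum_{j ~ i} d_ij d_j.
   As d_ij <= D_max, some vertex i satisfies
     (m-1)(l - d_i)^2 + l - d_i/2 <= D_max^2 (m-1) d_i m_i,
   and solving this quadratic inequality for l gives the bound. *)

theory Submission
  imports Defs "Jordan_Normal_Form.Char_Poly"
begin

section \<open>Finiteness of the spectrum\<close>

lemma eigenvalue_mat_if_mem_eigenvalues_on:
  assumes f: "bij_betw f {0..<n} V" and "\<mu> \<in> eigenvalues_on V A"
  shows "eigenvalue (mat n n (\<lambda>(k, l). A (f k) (f l))) \<mu>"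
proof -
  define B where "B = mat n n (\<lambda>(k, l). A (f k) (f l))"
  obtain x where x: "\<exists>i\<in>V. x i \<noteq> 0" and eig: "\<forall>i\<in>V. (\<Sum>j\<in>V. A i j * x j) = \<mu> * x i"
    using assms(2) unfolding eigenvalues_on_def by blast
  define v where "v = vec n (\<lambda>k. x (f k))"
  obtain k where "k < n" and "x (f k) \<noteq> 0"
    using f x unfolding bij_betw_def by auto
  then have "v \<noteq> 0\<^sub>v n"
    unfolding v_def by (metis index_vec index_zero_vec(1))
  moreover have "B *\<^sub>v v = \<mu> \<cdot>\<^sub>v v"
  proof (rule eq_vecI)
    fix k assume "k < dim_vec (\<mu> \<cdot>\<^sub>v v)"
    then have k: "k < n" and "f k \<in> V"
      using f unfolding v_def bij_betw_def by auto
    have "(B *\<^sub>v v) $ k = (\<Sum>l\<in>{0..<n}. A (f k) (f l) * x (f l))"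
      using k unfolding B_def v_def by (simp add: scalar_prod_def)
    also have "\<dots> = (\<Sum>j\<in>V. A (f k) j * x j)"
      using sum.reindex_bij_betw[OF f, of "\<lambda>j. A (f k) j * x j"] by simp
    also have "\<dots> = \<mu> * x (f k)"
      using eig \<open>f k \<in> V\<close> by blast
    finally show "(B *\<^sub>v v) $ k = (\<mu> \<cdot>\<^sub>v v) $ k"
      using k unfolding v_def by simp
  qed (simp add: B_def v_def)
  moreover have "v \<in> carrier_vec (dim_row B)"
    unfolding B_def v_def by simp
  ultimately show ?thesis
    unfolding B_def[symmetric] eigenvalue_def eigenvector_def by (auto simp: B_def)
qed

lemma finite_eigenvalues_on:
  assumes "finite V"
  shows "finite (eigenvalues_on V A)"
proof -
  obtain f where f: "bij_betw f {0..<card V} V"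
    using ex_bij_betw_nat_finite[OF assms] by blast
  define B where "B = mat (card V) (card V) (\<lambda>(k, l). A (f k) (f l))"
  have B: "B \<in> carrier_mat (card V) (card V)"
    unfolding B_def by simp
  have "eigenvalues_on V A \<subseteq> {\<mu>. poly (char_poly B) \<mu> = 0}"
    using eigenvalue_mat_if_mem_eigenvalues_on[OF f] eigenvalue_root_char_poly[OF B]
    unfolding B_def by blast
  moreover have "char_poly B \<noteq> 0"
    using degree_monic_char_poly[OF B] by auto
  ultimately show ?thesis
    using poly_roots_finite finite_subset by blast
qed

section \<open>Quadratic forms on a single edge\<close>

lemma sum_sum_Diff_singleton_swap:
  assumes "finite e"
  shows "(\<Sum>i\<in>e. \<Sum>k\<in>e-{i}. f i k) = (\<Sum>k\<in>e. \<Sum>i\<in>e-{k}. f i k)"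
proof -
  have "(\<Sum>i\<in>e. \<Sum>k\<in>e-{i}. f i k) = (\<Sum>i\<in>e. \<Sum>k\<in>{k. k\<in>e \<and> i \<noteq> k}. f i k)"
    by (intro sum.cong refl arg_cong[where f="sum _"]) auto
  also have "\<dots> = (\<Sum>k\<in>e. \<Sum>i\<in>{i. i\<in>e \<and> i \<noteq> k}. f i k)"
    by (rule sum.swap_restrict[OF assms assms])
  also have "\<dots> = (\<Sum>k\<in>e. \<Sum>i\<in>e-{k}. f i k)"
    by (intro sum.cong refl arg_cong[where f="sum _"]) auto
  finally show ?thesis .
qed

lemma weighted_sum_Diff_singleton_squared_le:
  fixes x w :: "'a \<Rightarrow> real"
  assumes "finite e" and "\<forall>i\<in>e. w i \<ge> 0"
  shows "(\<Sum>i\<in>e. w i * (\<Sum>j\<in>e-{i}. x j)\<^sup>2)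
         \<le> (real (card e) - 1) * (\<Sum>k\<in>e. (x k)\<^sup>2 * (\<Sum>i\<in>e-{k}. w i))"
proof -
  have "(\<Sum>i\<in>e. w i * (\<Sum>j\<in>e-{i}. x j)\<^sup>2)
        \<le> (\<Sum>i\<in>e. w i * ((real (card e) - 1) * (\<Sum>k\<in>e-{i}. (x k)\<^sup>2)))"
  proof (rule sum_mono)
    fix i assume "i \<in> e"
    moreover have "card e \<ge> 1"
      using \<open>i \<in> e\<close> assms(1) by (auto simp: Suc_le_eq card_gt_0_iff)
    ultimately have "(\<Sum>j\<in>e-{i}. x j)\<^sup>2 \<le> (real (card e) - 1) * (\<Sum>k\<in>e-{i}. (x k)\<^sup>2)"
      using sum_squared_le_sum_of_squares[of x "e-{i}"] assms(1)
      by (simp add: card_Diff_singleton of_nat_diff mult.commute)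
    then show "w i * (\<Sum>j\<in>e-{i}. x j)\<^sup>2 \<le> w i * ((real (card e) - 1) * (\<Sum>k\<in>e-{i}. (x k)\<^sup>2))"
      using assms(2) \<open>i \<in> e\<close> by (simp add: mult_left_mono)
  qed
  also have "\<dots> = (real (card e) - 1) * (\<Sum>i\<in>e. \<Sum>k\<in>e-{i}. w i * (x k)\<^sup>2)"
    by (simp add: sum_distrib_left algebra_simps)
  also have "\<dots> = (real (card e) - 1) * (\<Sum>k\<in>e. \<Sum>i\<in>e-{k}. w i * (x k)\<^sup>2)"
    \<comment> \<open>a single rewrite: as a simp rule the swap equation would loop\<close>
    by (subst sum_sum_Diff_singleton_swap[OF assms(1)]) (rule refl)
  also have "\<dots> = (real (card e) - 1) * (\<Sum>k\<in>e. (x k)\<^sup>2 * (\<Sum>i\<in>e-{k}. w i))"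
    by (simp add: sum_distrib_left mult.commute)
  finally show ?thesis .
qed

lemma sum_Diff_singleton_quadratic_le:
  fixes x :: "'a \<Rightarrow> real"
  assumes "finite e" and "card e \<ge> 3"
  shows "(\<Sum>i\<in>e. (\<Sum>j\<in>e-{i}. x j)\<^sup>2 - x i * (\<Sum>j\<in>e-{i}. x j))
         \<le> (real (card e) - 1) * (real (card e) - 2) * (\<Sum>i\<in>e. (x i)\<^sup>2)"
proof -
  define n where "n = real (card e)"
  define X where "X = (\<Sum>k\<in>e. x k)"
  define P where "P = (\<Sum>k\<in>e. (x k)\<^sup>2)"
  have "(\<Sum>i\<in>e. (\<Sum>j\<in>e-{i}. x j)\<^sup>2 - x i * (\<Sum>j\<in>e-{i}. x j))
      = (\<Sum>i\<in>e. X\<^sup>2 - 3 * X * x i + 2 * (x i)\<^sup>2)"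
  proof (rule sum.cong[OF refl])
    fix i assume "i \<in> e"
    then have z: "(\<Sum>j\<in>e-{i}. x j) = X - x i"
      using assms(1) by (simp add: X_def sum_diff1)
    show "(\<Sum>j\<in>e-{i}. x j)\<^sup>2 - x i * (\<Sum>j\<in>e-{i}. x j) = X\<^sup>2 - 3 * X * x i + 2 * (x i)\<^sup>2"
      unfolding z by (simp add: power2_eq_square algebra_simps)
  qed
  also have "\<dots> = n * X\<^sup>2 - 3 * X * X + 2 * P"
    by (simp add: sum.distrib sum_subtractf sum_distrib_left n_def X_def P_def)
  also have "\<dots> = (n - 3) * X\<^sup>2 + 2 * P"
    by (simp add: power2_eq_square algebra_simps)
  also have "\<dots> \<le> (n - 1) * (n - 2) * P"
  proof -
    have "(n - 3) * X\<^sup>2 \<le> (n - 3) * (P * n)"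
      using sum_squared_le_sum_of_squares[of x e] assms(2)
      by (intro mult_left_mono) (auto simp: n_def X_def P_def)
    then show ?thesis by (simp add: algebra_simps)
  qed
  finally show ?thesis unfolding n_def P_def .
qed

lemma edge_quadratic_form_le:
  fixes x d :: "'a \<Rightarrow> real"
  assumes e: "finite e" "card e \<ge> 3" and d: "\<forall>i\<in>e. d i \<ge> 1"
  shows "(\<Sum>i\<in>e. d i * (\<Sum>j\<in>e-{i}. x j)\<^sup>2 - x i * (\<Sum>j\<in>e-{i}. x j)
                + (real (card e) - 1) * (x i)\<^sup>2 / 2)
         \<le> (real (card e) - 1) * (\<Sum>i\<in>e. (x i)\<^sup>2 * (\<Sum>j\<in>e-{i}. d j))"
proof -
  define a where "a = real (card e) - 1"
  define P where "P = (\<Sum>i\<in>e. (x i)\<^sup>2)"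
  have a: "a \<ge> 2" using e(2) unfolding a_def by simp
  have card_Diff: "real (card (e - {k})) = a" if "k \<in> e" for k
    using that e by (simp add: a_def card_Diff_singleton of_nat_diff)
  \<comment> \<open>split \<open>d i = 1 + (d i - 1)\<close>: the excess is bounded by the weighted Cauchy-Schwarz
    inequality, the unit part by the previous lemma\<close>
  have "(\<Sum>i\<in>e. d i * (\<Sum>j\<in>e-{i}. x j)\<^sup>2 - x i * (\<Sum>j\<in>e-{i}. x j) + a * (x i)\<^sup>2 / 2)
      = (\<Sum>i\<in>e. (d i - 1) * (\<Sum>j\<in>e-{i}. x j)\<^sup>2)
        + (\<Sum>i\<in>e. (\<Sum>j\<in>e-{i}. x j)\<^sup>2 - x i * (\<Sum>j\<in>e-{i}. x j)) + a * P / 2"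
    by (simp add: P_def sum.distrib sum_subtractf sum_distrib_left sum_divide_distrib
        algebra_simps)
  also have "\<dots> \<le> a * (\<Sum>k\<in>e. (x k)\<^sup>2 * (\<Sum>i\<in>e-{k}. d i - 1)) + a * (a - 1) * P + a * P / 2"
    using weighted_sum_Diff_singleton_squared_le[OF e(1), of "\<lambda>i. d i - 1" x]
      sum_Diff_singleton_quadratic_le[OF e, of x] d
    by (simp add: a_def P_def algebra_simps)
  also have "(\<Sum>k\<in>e. (x k)\<^sup>2 * (\<Sum>i\<in>e-{k}. d i - 1))
      = (\<Sum>k\<in>e. (x k)\<^sup>2 * (\<Sum>i\<in>e-{k}. d i)) - a * P"
    using card_Diff by (simp add: sum_subtractf right_diff_distrib P_def sum_distrib_left mult.commute)
  also have "a * ((\<Sum>k\<in>e. (x k)\<^sup>2 * (\<Sum>i\<in>e-{k}. d i)) - a * P) + a * (a - 1) * P + a * P / 2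
      = a * (\<Sum>k\<in>e. (x k)\<^sup>2 * (\<Sum>i\<in>e-{k}. d i)) - a * P / 2"
    by (simp add: algebra_simps)
  also have "\<dots> \<le> a * (\<Sum>k\<in>e. (x k)\<^sup>2 * (\<Sum>i\<in>e-{k}. d i))"
    using a by (simp add: P_def sum_nonneg)
  finally show ?thesis unfolding a_def .
qed

section \<open>Hypergraph sums and the Laplacian\<close>

lemma hypergraph_finite_edges:
  assumes "hypergraph V E"
  shows "finite E"
  using assms unfolding hypergraph_def by (meson Pow_iff finite_Pow_iff finite_subset subsetI)

lemma hypergraph_finite_edge:
  assumes "hypergraph V E" and "e \<in> E"
  shows "finite e"
  using assms unfolding hypergraph_def by (meson finite_subset)

lemma deg_pos:
  assumes "finite E" and "e \<in> E" and "j \<in> e"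
  shows "deg E j > 0"
  using assms unfolding deg_def by (auto simp: card_gt_0_iff)

lemma adj_if_codeg_pos:
  assumes "codeg E i j > 0" and "i \<noteq> j"
  shows "adj E i j"
  using assms unfolding codeg_def adj_def by (auto simp: card_gt_0_iff)

lemma codeg_le_Dmax:
  assumes "finite V" and "i \<in> V" and "j \<in> V" and "i \<noteq> j"
  shows "codeg E i j \<le> Dmax V E"
proof -
  have "{codeg E x y | x y. x \<in> V \<and> y \<in> V \<and> x \<noteq> y} \<subseteq> (\<lambda>(x, y). codeg E x y) ` (V \<times> V)"
    by auto
  then have "finite {codeg E x y | x y. x \<in> V \<and> y \<in> V \<and> x \<noteq> y}"
    using assms(1) by (meson finite_SigmaI finite_imageI finite_subset)
  then show ?thesis
    unfolding Dmax_def using assms(2-4) by (intro Max_ge) blast+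
qed

lemma sum_vertices_edges_swap:
  assumes "hypergraph V E"
  shows "(\<Sum>i\<in>V. \<Sum>e\<in>{e\<in>E. i \<in> e}. g i e) = (\<Sum>e\<in>E. \<Sum>i\<in>e. g i e)"
proof -
  have "(\<Sum>i\<in>V. \<Sum>e\<in>{e\<in>E. i \<in> e}. g i e) = (\<Sum>e\<in>E. \<Sum>i\<in>{i\<in>V. i \<in> e}. g i e)"
    using assms hypergraph_finite_edges unfolding hypergraph_def
    by (intro sum.swap_restrict) auto
  also have "\<dots> = (\<Sum>e\<in>E. \<Sum>i\<in>e. g i e)"
    using assms unfolding hypergraph_def
    by (intro sum.cong refl arg_cong[where f="sum _"]) auto
  finally show ?thesis .
qed

lemma sum_codeg_mult:
  assumes "hypergraph V E"
  shows "(\<Sum>j\<in>V-{i}. real (codeg E i j) * f j) = (\<Sum>e\<in>{e\<in>E. i \<in> e}. \<Sum>j\<in>e-{i}. f j)"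
proof -
  have fin: "finite V" "finite E" and sub: "\<forall>e\<in>E. e \<subseteq> V"
    using assms hypergraph_finite_edges unfolding hypergraph_def by auto
  have "(\<Sum>j\<in>V-{i}. real (codeg E i j) * f j) = (\<Sum>j\<in>V-{i}. \<Sum>e\<in>{e\<in>E. i \<in> e \<and> j \<in> e}. f j)"
    unfolding codeg_def by simp
  also have "\<dots> = (\<Sum>e\<in>E. \<Sum>j\<in>{j\<in>V-{i}. i \<in> e \<and> j \<in> e}. f j)"
    using fin by (intro sum.swap_restrict) auto
  also have "\<dots> = (\<Sum>e\<in>E. if i \<in> e then (\<Sum>j\<in>e-{i}. f j) else 0)"
    using sub by (intro sum.cong refl) (auto intro: arg_cong[where f="sum _"])
  also have "\<dots> = (\<Sum>e\<in>{e\<in>E. i \<in> e}. \<Sum>j\<in>e-{i}. f j)"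
    using fin by (simp add: sum.inter_filter)
  finally show ?thesis .
qed

lemma laplacian_row_sum:
  assumes "hypergraph V E" and "i \<in> V"
  shows "(\<Sum>j\<in>V. laplacian m E i j * x j) =
    real (deg E i) * x i - (\<Sum>e\<in>{e\<in>E. i \<in> e}. \<Sum>j\<in>e-{i}. x j) / (real m - 1)"
proof -
  have "finite V" using assms(1) unfolding hypergraph_def by simp
  then have "(\<Sum>j\<in>V. laplacian m E i j * x j)
      = laplacian m E i i * x i + (\<Sum>j\<in>V-{i}. laplacian m E i j * x j)"
    using assms(2) by (rule sum.remove)
  also have "laplacian m E i i = real (deg E i)"
    by (simp add: laplacian_def)
  also have "(\<Sum>j\<in>V-{i}. laplacian m E i j * x j)
      = (\<Sum>j\<in>V-{i}. - (real (codeg E i j) * x j / (real m - 1)))"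
    by (rule sum.cong) (auto simp: laplacian_def)
  also have "\<dots> = - (\<Sum>j\<in>V-{i}. real (codeg E i j) * x j) / (real m - 1)"
    by (simp add: sum_divide_distrib sum_negf)
  finally show ?thesis
    unfolding sum_codeg_mult[OF assms(1)] by simp
qed

lemma zero_mem_eigenvalues_laplacian:
  assumes G: "hypergraph V E" and "uniform m E" and "m \<ge> 2" and "V \<noteq> {}"
  shows "0 \<in> eigenvalues_on V (laplacian m E)"
  unfolding eigenvalues_on_def
proof (intro CollectI exI[of _ "\<lambda>_. 1"] conjI ballI)
  show "\<exists>i\<in>V. (1::real) \<noteq> 0" using assms(4) by auto
next
  fix i assume "i \<in> V"
  have "(\<Sum>j\<in>e-{i}. 1::real) = real m - 1" if "e \<in> E" and "i \<in> e" for e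
  proof -
    have "finite e" and "card e = m"
      using that \<open>uniform m E\<close> hypergraph_finite_edge[OF G] by (auto simp: uniform_def)
    moreover have "card e \<ge> 1"
      using \<open>finite e\<close> \<open>i \<in> e\<close> by (auto simp: Suc_le_eq card_gt_0_iff)
    ultimately show ?thesis
      using \<open>i \<in> e\<close> by (simp add: card_Diff_singleton of_nat_diff)
  qed
  then have "(\<Sum>e\<in>{e\<in>E. i \<in> e}. \<Sum>j\<in>e-{i}. 1::real) = real (deg E i) * (real m - 1)"
    by (simp add: deg_def)
  then show "(\<Sum>j\<in>V. laplacian m E i j * 1) = 0 * 1"
    using laplacian_row_sum[OF G \<open>i \<in> V\<close>, of m "\<lambda>_. 1"] \<open>m \<ge> 2\<close> by simp
qed

lemma sum_codeg_mult_deg_le: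
  assumes "hypergraph V E" and "i \<in> V"
  shows "(\<Sum>j\<in>V-{i}. real (codeg E i j) * real (deg E j))
         \<le> (real (Dmax V E))\<^sup>2 * (\<Sum>j\<in>{j\<in>V. adj E i j}. real (deg E j))"
proof -
  have fin: "finite V" using assms(1) unfolding hypergraph_def by simp
  have "(\<Sum>j\<in>V-{i}. real (codeg E i j) * real (deg E j))
      \<le> (\<Sum>j\<in>V-{i}. if adj E i j then (real (Dmax V E))\<^sup>2 * real (deg E j) else 0)"
  proof (rule sum_mono)
    fix j assume j: "j \<in> V-{i}"
    show "real (codeg E i j) * real (deg E j)
          \<le> (if adj E i j then (real (Dmax V E))\<^sup>2 * real (deg E j) else 0)"
    proof (cases "adj E i j")
      case True
      have "codeg E i j \<le> Dmax V E"
        using codeg_le_Dmax[OF fin assms(2), of j E] j by auto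
      then have "codeg E i j \<le> (Dmax V E)\<^sup>2"
        by (metis le_square order_trans power2_eq_square)
      then show ?thesis
        using True by (simp add: mult_right_mono flip: of_nat_power)
    next
      case False
      then have "codeg E i j = 0" using adj_if_codeg_pos[of E i j] j by auto
      then show ?thesis by simp
    qed
  qed
  also have "\<dots> = (\<Sum>j\<in>{j\<in>V-{i}. adj E i j}. (real (Dmax V E))\<^sup>2 * real (deg E j))"
    by (rule sum.inter_filter[symmetric]) (use fin in simp)
  also have "{j\<in>V-{i}. adj E i j} = {j\<in>V. adj E i j}"
    unfolding adj_def by auto
  finally show ?thesis by (simp add: sum_distrib_left)
qed

lemma laplacian_eigenvector_vertex_ineq:
  assumes G: "hypergraph V E" and "m \<ge> 2" and "i \<in> V"
    and eig: "(\<Sum>j\<in>V. laplacian m E i j * x j) = l * x i"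
  shows "(real m - 1) * (((real m - 1) * (l - real (deg E i))\<^sup>2 + l - real (deg E i) / 2) * (x i)\<^sup>2)
    \<le> (\<Sum>e\<in>{e\<in>E. i \<in> e}. real (deg E i) * (\<Sum>j\<in>e-{i}. x j)\<^sup>2
          - x i * (\<Sum>j\<in>e-{i}. x j) + (real m - 1) * (x i)\<^sup>2 / 2)"
proof -
  define a where "a = real m - 1"
  define d where "d = real (deg E i)"
  define z where "z e = (\<Sum>j\<in>e-{i}. x j)" for e
  define y where "y = (\<Sum>e\<in>{e\<in>E. i \<in> e}. z e)"
  have a: "a > 0" using \<open>m \<ge> 2\<close> by (simp add: a_def)
  have card_star: "real (card {e\<in>E. i \<in> e}) = d"
    by (simp add: d_def deg_def)
  have "d * x i - y / a = l * x i"
    using eig laplacian_row_sum[OF G \<open>i \<in> V\<close>, of m x] by (simp add: a_def d_def y_def z_def)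
  then have y_eq: "y = a * (d - l) * x i"
    using a by (simp add: field_simps)
  have "a * ((a * (l - d)\<^sup>2 + l - d / 2) * (x i)\<^sup>2) = y\<^sup>2 - x i * y + a * d * (x i)\<^sup>2 / 2"
    unfolding y_eq by (simp add: power2_eq_square algebra_simps)
  also have "y\<^sup>2 \<le> d * (\<Sum>e\<in>{e\<in>E. i \<in> e}. (z e)\<^sup>2)"
    using sum_squared_le_sum_of_squares[of z "{e\<in>E. i \<in> e}"]
    by (simp add: y_def card_star mult.commute)
  also have "d * (\<Sum>e\<in>{e\<in>E. i \<in> e}. (z e)\<^sup>2) - x i * y + a * d * (x i)\<^sup>2 / 2
      = (\<Sum>e\<in>{e\<in>E. i \<in> e}. d * (z e)\<^sup>2 - x i * z e + a * (x i)\<^sup>2 / 2)"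
    by (simp add: y_def sum.distrib sum_subtractf sum_distrib_left card_star
        flip: sum_divide_distrib)
  finally show ?thesis by (simp add: a_def d_def z_def)
qed

lemma laplacian_eigenvector_quadratic_ineq:
  assumes G: "hypergraph V E" and "uniform m E" and "m \<ge> 3"
    and eig: "\<forall>i\<in>V. (\<Sum>j\<in>V. laplacian m E i j * x j) = l * x i"
  shows "(\<Sum>i\<in>V. ((real m - 1) * (l - real (deg E i))\<^sup>2 + l - real (deg E i) / 2) * (x i)\<^sup>2)
         \<le> (\<Sum>i\<in>V. (\<Sum>j\<in>V-{i}. real (codeg E i j) * real (deg E j)) * (x i)\<^sup>2)"
proof -
  define a where "a = real m - 1"
  define d where "d j = real (deg E j)" for j
  define h where "h i e = d i * (\<Sum>j\<in>e-{i}. x j)\<^sup>2 - x i * (\<Sum>j\<in>e-{i}. x j) + a * (x i)\<^sup>2 / 2"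
    for i e
  have a: "a \<ge> 2" using \<open>m \<ge> 3\<close> by (simp add: a_def)
  have "a * (\<Sum>i\<in>V. (a * (l - d i)\<^sup>2 + l - d i / 2) * (x i)\<^sup>2)
      \<le> (\<Sum>i\<in>V. \<Sum>e\<in>{e\<in>E. i \<in> e}. h i e)"
    unfolding sum_distrib_left using laplacian_eigenvector_vertex_ineq[OF G] eig \<open>m \<ge> 3\<close>
    by (intro sum_mono) (simp add: a_def d_def h_def)
  also have "\<dots> = (\<Sum>e\<in>E. \<Sum>i\<in>e. h i e)"
    by (rule sum_vertices_edges_swap[OF G])
  also have "\<dots> \<le> (\<Sum>e\<in>E. a * (\<Sum>i\<in>e. (x i)\<^sup>2 * (\<Sum>j\<in>e-{i}. d j)))"
  proof (rule sum_mono)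
    fix e assume "e \<in> E"
    then have "card e = m" and "finite e" and "\<forall>i\<in>e. d i \<ge> 1"
      using \<open>uniform m E\<close> hypergraph_finite_edge[OF G] deg_pos[OF hypergraph_finite_edges[OF G]]
      by (auto simp: uniform_def d_def Suc_le_eq)
    then show "(\<Sum>i\<in>e. h i e) \<le> a * (\<Sum>i\<in>e. (x i)\<^sup>2 * (\<Sum>j\<in>e-{i}. d j))"
      using edge_quadratic_form_le[of e d x] \<open>m \<ge> 3\<close> by (simp add: h_def a_def)
  qed
  also have "\<dots> = a * (\<Sum>i\<in>V. \<Sum>e\<in>{e\<in>E. i \<in> e}. (x i)\<^sup>2 * (\<Sum>j\<in>e-{i}. d j))"
    by (simp add: sum_vertices_edges_swap[OF G] sum_distrib_left)
  also have "\<dots> = a * (\<Sum>i\<in>V. (x i)\<^sup>2 * (\<Sum>j\<in>V-{i}. real (codeg E i j) * d j))"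
    by (simp add: sum_codeg_mult[OF G] sum_distrib_left)
  finally show ?thesis
    using a by (simp add: a_def d_def mult.commute)
qed

lemma ex_le_if_weighted_sum_le:
  fixes b c x :: "'a \<Rightarrow> real"
  assumes "finite V" and "\<exists>i\<in>V. x i \<noteq> 0"
    and "(\<Sum>i\<in>V. c i * (x i)\<^sup>2) \<le> (\<Sum>i\<in>V. b i * (x i)\<^sup>2)"
  shows "\<exists>i\<in>V. c i \<le> b i"
proof (rule ccontr)
  assume "\<not> ?thesis"
  then have bc: "\<forall>i\<in>V. b i < c i" by auto
  obtain i where "i \<in> V" and "x i \<noteq> 0" using assms(2) by blast
  then have "b i * (x i)\<^sup>2 < c i * (x i)\<^sup>2"
    using bc by (simp add: mult_strict_right_mono)
  then have "(\<Sum>i\<in>V. b i * (x i)\<^sup>2) < (\<Sum>i\<in>V. c i * (x i)\<^sup>2)"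
    using assms(1) bc \<open>i \<in> V\<close>
    by (intro sum_strict_mono_ex1) (auto intro!: mult_right_mono simp: less_imp_le)
  then show False using assms(3) by simp
qed

lemma exists_vertex_laplacian_eigenvalue_ineq:
  assumes "hypergraph V E" and "uniform m E" and "m \<ge> 3"
    and "l \<in> eigenvalues_on V (laplacian m E)"
  shows "\<exists>i\<in>V. (real m - 1) * (l - real (deg E i))\<^sup>2 + l - real (deg E i) / 2
           \<le> (real (Dmax V E))\<^sup>2 * (\<Sum>j\<in>{j\<in>V. adj E i j}. real (deg E j))"
proof -
  obtain x where x: "\<exists>i\<in>V. x i \<noteq> 0"
    and eig: "\<forall>i\<in>V. (\<Sum>j\<in>V. laplacian m E i j * x j) = l * x i"
    using assms(4) unfolding eigenvalues_on_def by blast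
  have "(\<Sum>i\<in>V. ((real m - 1) * (l - real (deg E i))\<^sup>2 + l - real (deg E i) / 2) * (x i)\<^sup>2)
      \<le> (\<Sum>i\<in>V. (\<Sum>j\<in>V-{i}. real (codeg E i j) * real (deg E j)) * (x i)\<^sup>2)"
    using laplacian_eigenvector_quadratic_ineq[OF assms(1-3) eig] .
  also have "\<dots> \<le> (\<Sum>i\<in>V. ((real (Dmax V E))\<^sup>2 * (\<Sum>j\<in>{j\<in>V. adj E i j}. real (deg E j))) * (x i)\<^sup>2)"
    by (intro sum_mono mult_right_mono sum_codeg_mult_deg_le[OF assms(1)]) auto
  finally show ?thesis
    using assms(1) x unfolding hypergraph_def by (intro ex_le_if_weighted_sum_le) auto
qed

lemma le_quadratic_root:
  fixes a d l K :: real
  assumes "a > 0" and "a * (l - d)\<^sup>2 + l - d / 2 \<le> K"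
  shows "l \<le> (2 * d * a - 1 + sqrt (4 * a * K - 2 * d * a + 1)) / (2 * a)"
proof -
  have "(2 * a * (l - d) + 1)\<^sup>2 = 4 * a * (a * (l - d)\<^sup>2 + l - d / 2) - 2 * d * a + 1"
    by (simp add: power2_eq_square algebra_simps)
  also have "\<dots> \<le> 4 * a * K - 2 * d * a + 1"
    using assms by simp
  finally have "2 * a * (l - d) + 1 \<le> sqrt (4 * a * K - 2 * d * a + 1)"
    using real_le_rsqrt by blast
  then show ?thesis
    using assms(1) by (simp add: field_simps)
qed

lemma deg_mult_mi:
  assumes "finite E" and "m \<ge> 2"
  shows "(real m - 1) * real (deg E i) * mi m V E i = (\<Sum>j\<in>{j\<in>V. adj E i j}. real (deg E j))"
proof (cases "deg E i = 0")
  case True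
  then have no_neighbours: "{j\<in>V. adj E i j} = {}"
    using deg_pos[OF assms(1)] unfolding adj_def by fastforce
  show ?thesis unfolding no_neighbours using True by simp
next
  case False
  then show ?thesis
    using assms(2) by (simp add: mi_def)
qed

theorem theorem12:
  fixes V :: "'a set" and E :: "'a set set" and m :: nat
  assumes "hypergraph V E" and "uniform m E" and "hconnected V E"
    and "V \<noteq> {}" and "m > 2"
  shows "largest_eigenvalue V (laplacian m E) \<le>
    Max ((\<lambda>i. (2 * real (deg E i) * (real m - 1) - 1
        + sqrt (4 * (real m - 1)^2 * real (deg E i) * mi m V E i * (real (Dmax V E))^2
                - 2 * real (deg E i) * (real m - 1) + 1))
        / (2 * (real m - 1))) ` V)"
proof -
  define l where "l = largest_eigenvalue V (laplacian m E)"
  define a where "a = real m - 1"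
  have fin: "finite V" using assms(1) unfolding hypergraph_def by simp
  have "l \<in> eigenvalues_on V (laplacian m E)"
    unfolding l_def largest_eigenvalue_def
    using finite_eigenvalues_on[OF fin] zero_mem_eigenvalues_laplacian[OF assms(1,2) _ assms(4)]
      assms(5) by (intro Max_in) auto
  then obtain i where "i \<in> V"
    and bound: "a * (l - real (deg E i))\<^sup>2 + l - real (deg E i) / 2
         \<le> (real (Dmax V E))\<^sup>2 * (\<Sum>j\<in>{j\<in>V. adj E i j}. real (deg E j))"
    using exists_vertex_laplacian_eigenvalue_ineq[OF assms(1,2)] assms(5)
    unfolding a_def by fastforce
  note bound
  also have "\<dots> = a * real (deg E i) * mi m V E i * (real (Dmax V E))\<^sup>2"
    using deg_mult_mi[OF hypergraph_finite_edges[OF assms(1)]] assms(5) by (simp add: a_def)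
  finally have "l \<le> (2 * real (deg E i) * a - 1 + sqrt (4 * a * (a * real (deg E i) * mi m V E i
      * (real (Dmax V E))\<^sup>2) - 2 * real (deg E i) * a + 1)) / (2 * a)"
    using assms(5) by (intro le_quadratic_root) (simp_all add: a_def)
  also have "\<dots> \<le> Max ((\<lambda>i. (2 * real (deg E i) * (real m - 1) - 1
        + sqrt (4 * (real m - 1)^2 * real (deg E i) * mi m V E i * (real (Dmax V E))^2
                - 2 * real (deg E i) * (real m - 1) + 1))
        / (2 * (real m - 1))) ` V)"
    using fin \<open>i \<in> V\<close> by (intro Max_ge) (auto simp: a_def power2_eq_square mult_ac)
  finally show ?thesis unfolding l_def .
qed

end
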